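(* Let $<$ be an ordering of $\mathbb{F}_m$ preserved by the Artin automorphism of $\alpha\in B_m$, and $<'$ an ordering of $\mathbb{F}_n$ preserved by the Artin automorphism of $\beta\in B_n$. Let $\prec$ be the ordering of $\mathbb{F}_m*\mathbb{F}_n\cong\mathbb{F}_{m+n}$ constructed from $(\mathbb{F}_m,<)$ and $(\mathbb{F}_n,<')$ as in the context. Then the Artin automorphism of $\alpha\otimes\beta\in B_{m+n}$ preserves $\prec$.
   Context: $B_n$ is the braid group with generators $\sigma_1,\dots,\sigma_{n-1}$; the Artin representation $B_n\to\mathrm{Aut}(\mathbb{F}_n)$ ($\mathbb{F}_n$ free on $x_1,\dots,x_n$) sends $\sigma_i$ to $x_i\mapsto x_ix_{i+1}x_i^{-1}$, $x_{i+1}\mapsto x_i$, $x_j\mapsto x_j$ otherwise. Orderings are strict total orders invariant under left and right multiplication. $\alpha\otimes\beta\in B_{m+n}$ is the side-by-side braid, image of $(\alpha,\beta)$ under $B_m\times B_n\to B_{m+n}$, $\sigma_i\mapsto\sigma_i$ (first factor), $\sigma_j\mapsto\sigma_{m+j}$ (second factor). Identify $\mathbb{F}_m*\mathbb{F}_n$ with $\mathbb{F}_{m+n}$ by sending the generators of $\mathbb{F}_m$ to $x_1,\dots,x_m$ and those of $\mathbb{F}_n$ to $x_{m+1},\dots,x_{m+n}$. Construction of $\prec$ on $F*G$ from orderings $<_F,<_G$: order $F\times G$ lexicographically ($(f,g)<(f',g')$ iff $f<_Ff'$, or $f=f'$ and $g<_Gg'$); in $R=\mathbb{Z}(F\times G)$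 a nonzero element is positive if the coefficient of its largest group element is a positive integer; $\rho\colon F*G\to M_2(R[t])$ is the injective homomorphism with $\rho(f)=\begin{pmatrix} f&(f-1)t\\0&1\end{pmatrix}$, $\rho(g)=\begin{pmatrix}1&0\\(g-1)t&g\end{pmatrix}$; order matrix positions $(1,1)$, $(2,2)$, then the off-diagonal ones in a fixed order; a nonzero $M=\sum_iM_it^i$ is positive if for the least $n$ with $M_n\ne0$ the first nonzero entry of $M_n$ is positive in $R$; $x\prec y$ iff $\rho(y)-\rho(x)$ is positive. *)

theory Defs
  imports Main
begin

text \<open>A letter (k, b) stands for the generator x_(k+1) if b = False and for its
inverse if b = True (generators are indexed from 0).\<close>

type_synonym letter = "nat \<times> bool"
type_synonym word = "letter list"

fun red_cons :: "letter \<Rightarrow> word \<Rightarrow> word" where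
  "red_cons a [] = [a]"
| "red_cons a (b # w) = (if fst a = fst b \<and> snd a \<noteq> snd b then w else a # b # w)"

definition reduce :: "word \<Rightarrow> word" where
  "reduce w = foldr red_cons w []"

fun reduced :: "word \<Rightarrow> bool" where
  "reduced [] = True"
| "reduced [a] = True"
| "reduced (a # b # w) = (\<not> (fst a = fst b \<and> snd a \<noteq> snd b) \<and> reduced (b # w))"

definition free_group :: "nat \<Rightarrow> word set" where
  "free_group n = {w. reduced w \<and> (\<forall>a\<in>set w. fst a < n)}"

definition fmul :: "word \<Rightarrow> word \<Rightarrow> word" where
  "fmul u v = reduce (u @ v)"

definition finv :: "word \<Rightarrow> word" where
  "finv w = rev (map (\<lambda>(k, b). (k, \<not> b)) w)"

definition bi_order :: "nat \<Rightarrow> (word \<Rightarrow> word \<Rightarrow> bool) \<Rightarrow> bool" where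
  "bi_order n lt \<longleftrightarrow>
     (\<forall>x\<in>free_group n. \<not> lt x x) \<and>
     (\<forall>x\<in>free_group n. \<forall>y\<in>free_group n. \<forall>z\<in>free_group n. lt x y \<longrightarrow> lt y z \<longrightarrow> lt x z) \<and>
     (\<forall>x\<in>free_group n. \<forall>y\<in>free_group n. x \<noteq> y \<longrightarrow> lt x y \<or> lt y x) \<and>
     (\<forall>x\<in>free_group n. \<forall>y\<in>free_group n. \<forall>z\<in>free_group n.
        lt x y \<longrightarrow> lt (fmul z x) (fmul z y) \<and> lt (fmul x z) (fmul y z))"

text \<open>A braid word is a list of letters (i, b) standing for sigma_(i+1) (b = False)
or its inverse (b = True).  It is a word in the generators of B_n iff Suc (Suc i) \<le> n
for all its letters, i.e. 1 \<le> i+1 \<le> n-1.\<close>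

definition braid_word :: "nat \<Rightarrow> letter list \<Rightarrow> bool" where
  "braid_word n bw \<longleftrightarrow> (\<forall>a\<in>set bw. Suc (fst a) < n)"

fun sigma_img :: "letter \<Rightarrow> nat \<Rightarrow> word" where
  "sigma_img (i, False) j =
     (if j = i then [(i, False), (Suc i, False), (i, True)]
      else if j = Suc i then [(i, False)] else [(j, False)])"
| "sigma_img (i, True) j =
     (if j = i then [(Suc i, False)]
      else if j = Suc i then [(Suc i, True), (i, False), (Suc i, False)] else [(j, False)])"

definition subst :: "(nat \<Rightarrow> word) \<Rightarrow> word \<Rightarrow> word" where
  "subst s w = reduce (concat (map (\<lambda>(j, b). if b then finv (s j) else s j) w))"

text \<open>The Artin automorphism of a braid word: the representation is a homomorphism,
so the automorphism of a_1 ... a_k is phi(a_1) o ... o phi(a_k).\<close>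
definition artin :: "letter list \<Rightarrow> word \<Rightarrow> word" where
  "artin bw w = foldr (\<lambda>a v. subst (sigma_img a) v) bw w"

definition braid_tensor :: "nat \<Rightarrow> letter list \<Rightarrow> letter list \<Rightarrow> letter list" where
  "braid_tensor m bw1 bw2 = bw1 @ map (\<lambda>(i, b). (i + m, b)) bw2"

definition preserves :: "nat \<Rightarrow> (word \<Rightarrow> word \<Rightarrow> bool) \<Rightarrow> letter list \<Rightarrow> bool" where
  "preserves n lt bw \<longleftrightarrow>
     (\<forall>x\<in>free_group n. \<forall>y\<in>free_group n. lt x y \<longrightarrow> lt (artin bw x) (artin bw y))"

text \<open>Elements of R = Z(F x G) are finitely supported functions (word \<times> word) \<Rightarrow> int,
where the pair (f, g) is an element of F_m \<times> F_n.  An element of M_2(R[t]) is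
represented as M i j k = coefficient of t^k in entry (i,j) (i, j \<in> {0,1}).\<close>

type_synonym ring_el = "word \<times> word \<Rightarrow> int"
type_synonym matrix = "nat \<Rightarrow> nat \<Rightarrow> nat \<Rightarrow> ring_el"

definition pmul :: "word \<times> word \<Rightarrow> word \<times> word \<Rightarrow> word \<times> word" where
  "pmul p q = (fmul (fst p) (fst q), fmul (snd p) (snd q))"

definition rmul :: "ring_el \<Rightarrow> ring_el \<Rightarrow> ring_el" where
  "rmul r s h = (\<Sum>pq \<in> {pq. pmul (fst pq) (snd pq) = h \<and> r (fst pq) \<noteq> 0 \<and> s (snd pq) \<noteq> 0}.
                    r (fst pq) * s (snd pq))"

definition delta :: "word \<times> word \<Rightarrow> ring_el" where
  "delta p = (\<lambda>h. if h = p then 1 else 0)"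

definition mat_mult :: "matrix \<Rightarrow> matrix \<Rightarrow> matrix" where
  "mat_mult M N i j k h = (\<Sum>l<2. \<Sum>a\<le>k. rmul (M i l a) (N l j (k - a)) h)"

definition mat_one :: matrix where
  "mat_one i j k = (if i = j \<and> k = 0 then delta ([], []) else (\<lambda>_. 0))"

definition mat_sub :: "matrix \<Rightarrow> matrix \<Rightarrow> matrix" where
  "mat_sub M N i j k h = M i j k h - N i j k h"

text \<open>rho(f) = [[f, (f-1)t],[0,1]] for f in F_m.\<close>
definition rhoF :: "word \<Rightarrow> matrix" where
  "rhoF f i j k =
     (if i = 0 \<and> j = 0 \<and> k = 0 then delta (f, [])
      else if i = 0 \<and> j = 1 \<and> k = 1 then (\<lambda>h. delta (f, []) h - delta ([], []) h)
      else if i = 1 \<and> j = 1 \<and> k = 0 then delta ([], [])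
      else (\<lambda>_. 0))"

text \<open>rho(g) = [[1, 0],[(g-1)t, g]] for g in F_n.\<close>
definition rhoG :: "word \<Rightarrow> matrix" where
  "rhoG g i j k =
     (if i = 0 \<and> j = 0 \<and> k = 0 then delta ([], [])
      else if i = 1 \<and> j = 0 \<and> k = 1 then (\<lambda>h. delta ([], g) h - delta ([], []) h)
      else if i = 1 \<and> j = 1 \<and> k = 0 then delta ([], g)
      else (\<lambda>_. 0))"

text \<open>Under F_m * F_n = F_(m+n), a letter with index k < m is a letter of F_m, and a
letter with index k \<ge> m is the letter with index k - m of F_n.\<close>
definition rho_letter :: "nat \<Rightarrow> letter \<Rightarrow> matrix" where
  "rho_letter m a = (if fst a < m then rhoF [a] else rhoG [(fst a - m, snd a)])"

definition rho :: "nat \<Rightarrow> word \<Rightarrow> matrix" where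
  "rho m w = foldr mat_mult (map (rho_letter m) w) mat_one"

definition lex_lt :: "(word \<Rightarrow> word \<Rightarrow> bool) \<Rightarrow> (word \<Rightarrow> word \<Rightarrow> bool)
                      \<Rightarrow> word \<times> word \<Rightarrow> word \<times> word \<Rightarrow> bool" where
  "lex_lt lt1 lt2 p q \<longleftrightarrow> lt1 (fst p) (fst q) \<or> (fst p = fst q \<and> lt2 (snd p) (snd q))"

definition rpos :: "(word \<Rightarrow> word \<Rightarrow> bool) \<Rightarrow> (word \<Rightarrow> word \<Rightarrow> bool) \<Rightarrow> ring_el \<Rightarrow> bool" where
  "rpos lt1 lt2 r \<longleftrightarrow>
     (\<exists>h. r h > 0 \<and> (\<forall>h'. r h' \<noteq> 0 \<longrightarrow> h' = h \<or> lex_lt lt1 lt2 h' h))"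

text \<open>Matrix positions in the order (1,1), (2,2), (1,2), (2,1) (0-based below).\<close>
definition positions :: "(nat \<times> nat) list" where
  "positions = [(0, 0), (1, 1), (0, 1), (1, 0)]"

definition mat_pos :: "(word \<Rightarrow> word \<Rightarrow> bool) \<Rightarrow> (word \<Rightarrow> word \<Rightarrow> bool) \<Rightarrow> matrix \<Rightarrow> bool" where
  "mat_pos lt1 lt2 M \<longleftrightarrow>
     (\<exists>k i j. (\<forall>k'<k. \<forall>(i', j')\<in>set positions. M i' j' k' = (\<lambda>_. 0)) \<and>
              find (\<lambda>(i', j'). M i' j' k \<noteq> (\<lambda>_. 0)) positions = Some (i, j) \<and>
              rpos lt1 lt2 (M i j k))"

definition prec :: "nat \<Rightarrow> (word \<Rightarrow> word \<Rightarrow> bool) \<Rightarrow> (word \<Rightarrow> word \<Rightarrow> bool)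
                    \<Rightarrow> word \<Rightarrow> word \<Rightarrow> bool" where
  "prec m lt1 lt2 x y \<longleftrightarrow> mat_pos lt1 lt2 (mat_sub (rho m y) (rho m x))"

end

theory Submission
  imports Defs
begin

text \<open>
Let \<open>\<psi>\<close> be the automorphism of \<open>F\<^sub>m \<times> F\<^sub>n\<close> given by the Artin automorphisms of
\<open>\<alpha>\<close> and \<open>\<beta>\<close> in the two factors. Since \<open>\<alpha>\<close> and \<open>\<beta>\<close> preserve \<open><\<close> and \<open><'\<close>, \<open>\<psi>\<close> preserves
the lexicographic order, so its linear extension \<open>\<psi>\<^sub>*\<close> to \<open>\<int>(F\<^sub>m \<times> F\<^sub>n)\<close>, which is
injective on supports, maps positive elements to positive elements; applied entrywise it
maps positive matrices of \<open>M\<^sub>2(R[t])\<close> to positive matrices.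
The key identity is \<open>\<rho>((\<alpha> \<otimes> \<beta>)(w)) = \<psi>\<^sub>*(\<rho>(w))\<close>: both sides are multiplicative in \<open>w\<close>,
and on a generator of the first factor \<open>\<alpha> \<otimes> \<beta>\<close> acts as \<open>\<alpha>\<close>, on a generator of the second
as the shifted \<open>\<beta>\<close>. Hence \<open>\<rho>((\<alpha> \<otimes> \<beta>)(y)) - \<rho>((\<alpha> \<otimes> \<beta>)(x)) = \<psi>\<^sub>*(\<rho>(y) - \<rho>(x))\<close>
is positive whenever \<open>\<rho>(y) - \<rho>(x)\<close> is.
\<close>

section \<open>Free reduction\<close>

definition letter_inv :: "letter \<Rightarrow> letter" where
  "letter_inv a = (fst a, \<not> snd a)"

lemma letter_inv_letter_inv [simp]: "letter_inv (letter_inv a) = a"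
  by (simp add: letter_inv_def)

lemma fst_letter_inv [simp]: "fst (letter_inv a) = fst a"
  by (simp add: letter_inv_def)

lemma red_cons_Cons: "red_cons a (b # w) = (if b = letter_inv a then w else a # b # w)"
  by (cases a; cases b) (auto simp: letter_inv_def)

lemma reduced_Cons_Cons: "reduced (a # b # w) \<longleftrightarrow> b \<noteq> letter_inv a \<and> reduced (b # w)"
  by (cases a; cases b) (auto simp: letter_inv_def)

declare red_cons.simps(2) [simp del] reduced.simps(3) [simp del]

lemma reduced_ConsD: "reduced (a # w) \<Longrightarrow> reduced w"
  by (cases w) (auto simp: reduced_Cons_Cons)

lemma reduced_red_cons: "reduced w \<Longrightarrow> reduced (red_cons a w)"
  by (cases w) (auto simp: red_cons_Cons reduced_Cons_Cons dest: reduced_ConsD)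

lemma reduce_Nil [simp]: "reduce [] = []"
  by (simp add: reduce_def)

lemma reduce_Cons: "reduce (a # w) = red_cons a (reduce w)"
  by (simp add: reduce_def)

lemma reduce_append: "reduce (u @ v) = foldr red_cons u (reduce v)"
  by (simp add: reduce_def)

lemma reduced_reduce: "reduced (reduce w)"
  by (induction w) (auto simp: reduce_Cons reduced_red_cons)

lemma reduce_reduced: "reduced w \<Longrightarrow> reduce w = w"
proof (induction w)
  case (Cons a w)
  then have "reduce w = w" using reduced_ConsD by blast
  then show ?case using Cons.prems
    by (cases w) (auto simp: reduce_Cons red_cons_Cons reduced_Cons_Cons)
qed simp

lemma reduce_idem [simp]: "reduce (reduce w) = reduce w"
  by (simp add: reduce_reduced reduced_reduce)

lemma set_reduce: "set (reduce w) \<subseteq> set w"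
proof -
  have red_cons: "set (red_cons a v) \<subseteq> insert a (set v)" for a v
    by (cases v) (auto simp: red_cons_Cons)
  show ?thesis by (induction w) (auto simp: reduce_Cons dest!: red_cons[THEN subsetD])
qed

lemma red_cons_letter_inv_cancel: "reduced w \<Longrightarrow> red_cons a (red_cons (letter_inv a) w) = w"
  by (cases w rule: remdups_adj.cases)
     (auto simp: red_cons_Cons reduced_Cons_Cons)

lemma foldr_red_cons_reduce:
  assumes "reduced w"
  shows "foldr red_cons (reduce u) w = foldr red_cons u w"
proof (induction u)
  case (Cons a u)
  have reduced: "reduced (foldr red_cons v w)" for v
    using assms by (induction v) (auto simp: reduced_red_cons)
  show ?case
  proof (cases "reduce u")
    case (Cons b x)
    show ?thesis
    proof (cases "b = letter_inv a")
      case True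
      then have "red_cons a (foldr red_cons u w) = foldr red_cons x w"
        using Cons.IH Cons red_cons_letter_inv_cancel[OF reduced, of a x] by simp
      then show ?thesis using Cons True by (simp add: reduce_Cons red_cons_Cons)
    qed (use Cons Cons.IH in \<open>simp add: reduce_Cons red_cons_Cons\<close>)
  qed (use Cons.IH in \<open>simp add: reduce_Cons\<close>)
qed simp

lemma reduce_reduce_append: "reduce (reduce u @ v) = reduce (u @ v)"
  by (simp add: reduce_append foldr_red_cons_reduce reduced_reduce)

lemma reduce_append_reduce: "reduce (u @ reduce v) = reduce (u @ v)"
  by (simp add: reduce_append)

lemma fmul_assoc: "fmul (fmul u v) w = fmul u (fmul v w)"
  unfolding fmul_def by (metis append_assoc reduce_reduce_append reduce_append_reduce)

lemma fmul_Nil_left: "reduced w \<Longrightarrow> fmul [] w = w"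
  by (simp add: fmul_def reduce_reduced)

lemma fmul_Nil_right: "reduced w \<Longrightarrow> fmul w [] = w"
  by (simp add: fmul_def reduce_reduced)

lemma fmul_letter_inv: "fmul [a] [letter_inv a] = []"
  by (simp add: fmul_def reduce_Cons red_cons_Cons)

lemma finv_Nil [simp]: "finv [] = []"
  by (simp add: finv_def)

lemma finv_Cons: "finv (a # w) = finv w @ [letter_inv a]"
  by (cases a) (simp add: finv_def letter_inv_def)

lemma finv_finv [simp]: "finv (finv w) = w"
  by (induction w) (auto simp: finv_Cons finv_def letter_inv_def rev_map)

lemma set_finv: "set (finv w) = letter_inv ` set w"
  by (induction w) (auto simp: finv_Cons)

lemma reduce_append_finv: "reduce (w @ finv w) = []"
proof (induction w)
  case (Cons a w)
  have "reduce ((a # w) @ finv (a # w)) = red_cons a (reduce (reduce (w @ finv w) @ [letter_inv a]))"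
    by (simp add: finv_Cons reduce_Cons reduce_reduce_append)
  then show ?case using Cons by (simp add: reduce_Cons red_cons_Cons)
qed simp

lemma free_group_fmul: "u \<in> free_group n \<Longrightarrow> v \<in> free_group n \<Longrightarrow> fmul u v \<in> free_group n"
  unfolding free_group_def fmul_def using set_reduce reduced_reduce by fastforce

lemma Nil_in_free_group [simp]: "[] \<in> free_group n"
  by (simp add: free_group_def)

section \<open>The Artin action\<close>

definition subst_letter :: "(nat \<Rightarrow> word) \<Rightarrow> letter \<Rightarrow> word" where
  "subst_letter s a = (if snd a then finv (s (fst a)) else s (fst a))"

lemma subst_eq: "subst s w = reduce (concat (map (subst_letter s) w))"
proof -
  have "(\<lambda>(j, b). if b then finv (s j) else s j) = subst_letter s"
    by (auto simp: subst_letter_def)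
  then show ?thesis by (simp add: subst_def)
qed

lemma reduce_subst_red_cons:
  "reduce (concat (map (subst_letter s) (red_cons a x)))
     = reduce (subst_letter s a @ concat (map (subst_letter s) x))"
proof (cases x)
  case (Cons b x')
  show ?thesis
  proof (cases "b = letter_inv a")
    case True
    have "subst_letter s b = finv (subst_letter s a)"
      using True by (simp add: subst_letter_def letter_inv_def)
    then have "reduce (subst_letter s a @ concat (map (subst_letter s) x))
        = reduce (reduce (subst_letter s a @ finv (subst_letter s a)) @ concat (map (subst_letter s) x'))"
      using Cons by (simp add: reduce_reduce_append)
    then show ?thesis using Cons True by (simp add: red_cons_Cons reduce_append_finv)
  qed (use Cons in \<open>simp add: red_cons_Cons\<close>)
qed simp

lemma subst_reduce: "subst s (reduce w) = subst s w"
proof -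
  have "reduce (concat (map (subst_letter s) (reduce w))) = reduce (concat (map (subst_letter s) w))"
  proof (induction w)
    case (Cons a w)
    have "reduce (concat (map (subst_letter s) (reduce (a # w))))
        = reduce (subst_letter s a @ reduce (concat (map (subst_letter s) (reduce w))))"
      by (simp add: reduce_Cons reduce_subst_red_cons reduce_append_reduce)
    then show ?case using Cons by (simp add: reduce_append_reduce)
  qed simp
  then show ?thesis by (simp add: subst_eq)
qed

lemma subst_fmul: "subst s (fmul u v) = fmul (subst s u) (subst s v)"
  by (simp only: fmul_def subst_reduce)
     (simp add: subst_eq reduce_reduce_append reduce_append_reduce)

lemma artin_Nil_braid [simp]: "artin [] w = w"
  by (simp add: artin_def)

lemma artin_Cons: "artin (a # bw) w = subst (sigma_img a) (artin bw w)"
  by (simp add: artin_def)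

lemma artin_append: "artin (bw @ bw') w = artin bw (artin bw' w)"
  by (simp add: artin_def)

lemma artin_fmul: "artin bw (fmul u v) = fmul (artin bw u) (artin bw v)"
  by (induction bw) (simp_all add: artin_def subst_fmul)

lemma artin_Nil [simp]: "artin bw [] = []"
  by (induction bw) (simp_all add: artin_Cons subst_def)

lemma artin_reduced: "reduced w \<Longrightarrow> reduced (artin bw w)"
  by (cases bw) (auto simp: artin_Cons subst_def reduced_reduce)

lemma artin_fixes:
  assumes "\<forall>c\<in>set bw. \<forall>a\<in>set w. fst a \<noteq> fst c \<and> fst a \<noteq> Suc (fst c)" and "reduced w"
  shows "artin bw w = w"
  using assms
proof (induction bw)
  case (Cons c bw)
  have "subst_letter (sigma_img c) a = [a]" if "a \<in> set w" for a
    using Cons.prems(1) that by (cases c; cases "snd c"; cases a) (auto simp: subst_letter_def finv_def)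
  then have "concat (map (subst_letter (sigma_img c)) w) = w"
    by (induction w) auto
  then show ?case using Cons by (simp add: artin_Cons subst_eq reduce_reduced)
qed simp

lemma artin_free_group:
  assumes "braid_word m bw" "w \<in> free_group m"
  shows "artin bw w \<in> free_group m"
proof -
  have "\<forall>a\<in>set (artin bw w). fst a < m"
    using assms
  proof (induction bw)
    case (Cons c bw)
    have c: "Suc (fst c) < m" and "braid_word m bw"
      using Cons.prems by (auto simp: braid_word_def)
    then have IH: "\<forall>a\<in>set (artin bw w). fst a < m" using Cons by blast
    have "\<forall>a\<in>set (sigma_img c j). fst a < m" if "j < m" for j
      using c that by (cases c; cases "snd c") auto
    then have "\<forall>a\<in>set (subst_letter (sigma_img c) b). fst a < m" if "b \<in> set (artin bw w)" for b
      using IH that by (auto simp: subst_letter_def set_finv)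
    then show ?case
      unfolding artin_Cons subst_eq using set_reduce by fastforce
  qed (simp add: free_group_def)
  then show ?thesis
    using assms(2) artin_reduced by (simp add: free_group_def)
qed

definition shift_letter :: "nat \<Rightarrow> letter \<Rightarrow> letter" where
  "shift_letter m a = (fst a + m, snd a)"

lemma shift_letter_inj: "shift_letter m a = shift_letter m b \<longleftrightarrow> a = b"
  by (cases a; cases b) (auto simp: shift_letter_def)

lemma reduce_shift: "reduce (map (shift_letter m) w) = map (shift_letter m) (reduce w)"
proof -
  have "red_cons (shift_letter m a) (map (shift_letter m) v) = map (shift_letter m) (red_cons a v)" for a v
    by (cases v) (auto simp: red_cons_Cons shift_letter_inj shift_letter_def letter_inv_def)
  then show ?thesis by (induction w) (simp_all add: reduce_Cons)
qed

lemma reduced_shift: "reduced w \<Longrightarrow> reduced (map (shift_letter m) w)"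
  by (metis reduce_reduced reduce_shift reduced_reduce)

lemma artin_shift:
  "artin (map (shift_letter m) bw) (map (shift_letter m) w) = map (shift_letter m) (artin bw w)"
proof (induction bw)
  case (Cons c bw)
  have "sigma_img (shift_letter m c) (j + m) = map (shift_letter m) (sigma_img c j)" for j
    by (cases c; cases "snd c") (auto simp: shift_letter_def)
  then have "subst_letter (sigma_img (shift_letter m c)) (shift_letter m a)
      = map (shift_letter m) (subst_letter (sigma_img c) a)" for a
    by (simp add: subst_letter_def shift_letter_def finv_def rev_map case_prod_beta)
  then have "concat (map (subst_letter (sigma_img (shift_letter m c))) (map (shift_letter m) v))
      = map (shift_letter m) (concat (map (subst_letter (sigma_img c)) v))" for v
    by (induction v) auto
  then show ?case using Cons by (simp add: artin_Cons subst_eq reduce_shift)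
qed simp

lemma braid_tensor_eq: "braid_tensor m \<alpha> \<beta> = \<alpha> @ map (shift_letter m) \<beta>"
  by (simp add: braid_tensor_def shift_letter_def case_prod_beta)

section \<open>The group ring \<open>\<int>(F \<times> G)\<close>\<close>

definition rsupp :: "ring_el \<Rightarrow> (word \<times> word) set" where
  "rsupp r = {h. r h \<noteq> 0}"

lemma rsupp_zero [simp]: "rsupp (\<lambda>_. 0) = {}"
  by (simp add: rsupp_def)

lemma delta_same [simp]: "delta p p = 1"
  by (simp add: delta_def)

lemma rsupp_delta: "rsupp (delta p) = {p}"
  by (auto simp: rsupp_def delta_def)

lemma rsupp_diff: "rsupp (\<lambda>h. r h - s h) \<subseteq> rsupp r \<union> rsupp s"
  by (auto simp: rsupp_def)

lemma rsupp_lincomb: "rsupp (\<lambda>h. \<Sum>i\<in>I. c i * f i h) \<subseteq> (\<Union>i\<in>I. rsupp (f i))"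
proof
  fix h assume "h \<in> rsupp (\<lambda>h. \<Sum>i\<in>I. c i * f i h)"
  then obtain i where "i \<in> I" "c i * f i h \<noteq> 0"
    by (auto simp: rsupp_def intro: sum.not_neutral_contains_not_neutral)
  then show "h \<in> (\<Union>i\<in>I. rsupp (f i))" by (auto simp: rsupp_def)
qed

lemma finite_rsupp_lincomb:
  "finite I \<Longrightarrow> \<forall>i\<in>I. finite (rsupp (f i)) \<Longrightarrow> finite (rsupp (\<lambda>h. \<Sum>i\<in>I. c i * f i h))"
  by (rule finite_subset[OF rsupp_lincomb]) auto

lemma rsupp_sum: "rsupp (\<lambda>h. \<Sum>i\<in>I. f i h) \<subseteq> (\<Union>i\<in>I. rsupp (f i))"
  using rsupp_lincomb[of "\<lambda>_. 1" f I] by simp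

lemma finite_rsupp_sum:
  "finite I \<Longrightarrow> \<forall>i\<in>I. finite (rsupp (f i)) \<Longrightarrow> finite (rsupp (\<lambda>h. \<Sum>i\<in>I. f i h))"
  by (rule finite_subset[OF rsupp_sum]) auto

lemma rmul_eq_sum:
  assumes "finite A" "finite B" "rsupp r \<subseteq> A" "rsupp s \<subseteq> B"
  shows "rmul r s h = (\<Sum>p\<in>A. \<Sum>q\<in>B. r p * s q * delta (pmul p q) h)"
proof -
  let ?S = "{pq. pmul (fst pq) (snd pq) = h \<and> r (fst pq) \<noteq> 0 \<and> s (snd pq) \<noteq> 0}"
  have "?S \<subseteq> A \<times> B" using assms(3,4) by (auto simp: rsupp_def)
  then have "(\<Sum>pq\<in>A \<times> B. r (fst pq) * s (snd pq) * delta (pmul (fst pq) (snd pq)) h)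
      = (\<Sum>pq\<in>?S. r (fst pq) * s (snd pq))"
    by (intro sum.mono_neutral_cong_right) (use assms in \<open>auto simp: delta_def\<close>)
  then show ?thesis by (simp add: rmul_def sum.cartesian_product case_prod_beta)
qed

lemma rmul_eq_sum_Times:
  assumes "finite A" "finite B" "rsupp r \<subseteq> A" "rsupp s \<subseteq> B"
  shows "rmul r s = (\<lambda>h. \<Sum>pq\<in>A \<times> B. r (fst pq) * s (snd pq) * delta (pmul (fst pq) (snd pq)) h)"
  using assms by (auto simp: rmul_eq_sum sum.cartesian_product case_prod_beta)

lemma rsupp_rmul: "rsupp (rmul r s) \<subseteq> (\<lambda>pq. pmul (fst pq) (snd pq)) ` (rsupp r \<times> rsupp s)"
proof
  fix h assume "h \<in> rsupp (rmul r s)"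
  then have "{pq. pmul (fst pq) (snd pq) = h \<and> r (fst pq) \<noteq> 0 \<and> s (snd pq) \<noteq> 0} \<noteq> {}"
    unfolding rsupp_def rmul_def by (intro notI) simp
  then obtain pq where "pmul (fst pq) (snd pq) = h" "r (fst pq) \<noteq> 0" "s (snd pq) \<noteq> 0"
    by blast
  then show "h \<in> (\<lambda>pq. pmul (fst pq) (snd pq)) ` (rsupp r \<times> rsupp s)"
    by (intro image_eqI[of _ _ pq]) (auto simp: rsupp_def mem_Times_iff)
qed

lemma finite_rsupp_rmul: "finite (rsupp r) \<Longrightarrow> finite (rsupp s) \<Longrightarrow> finite (rsupp (rmul r s))"
  by (rule finite_subset[OF rsupp_rmul]) auto

lemma sum_Times_nested: "(\<Sum>pq\<in>A \<times> B. g pq) = (\<Sum>p\<in>A. \<Sum>q\<in>B. g (p, q))"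
  by (simp add: sum.cartesian_product)

lemma sum_nested_swap:
  "(\<Sum>p\<in>A. \<Sum>q\<in>B. \<Sum>i\<in>I. g p q i) = (\<Sum>i\<in>I. \<Sum>p\<in>A. \<Sum>q\<in>B. g p q i)"
proof -
  have "(\<Sum>p\<in>A. \<Sum>q\<in>B. \<Sum>i\<in>I. g p q i) = (\<Sum>p\<in>A. \<Sum>i\<in>I. \<Sum>q\<in>B. g p q i)"
    by (rule sum.cong[OF refl], rule sum.swap)
  then show ?thesis by (simp only: sum.swap[of _ A])
qed

lemma rmul_lincomb_left:
  assumes I: "finite I" and f: "\<forall>i\<in>I. finite (rsupp (f i))" and s: "finite (rsupp s)"
  shows "rmul (\<lambda>h. \<Sum>i\<in>I. c i * f i h) s h0 = (\<Sum>i\<in>I. c i * rmul (f i) s h0)"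
proof -
  define A where "A = (\<Union>i\<in>I. rsupp (f i))"
  have A: "finite A" using I f by (simp add: A_def)
  have "rmul (\<lambda>h. \<Sum>i\<in>I. c i * f i h) s h0
      = (\<Sum>p\<in>A. \<Sum>q\<in>rsupp s. (\<Sum>i\<in>I. c i * f i p) * s q * delta (pmul p q) h0)"
    using A s rsupp_lincomb[of c f I] by (intro rmul_eq_sum) (auto simp: A_def)
  also have "\<dots> = (\<Sum>p\<in>A. \<Sum>q\<in>rsupp s. \<Sum>i\<in>I. c i * (f i p * s q * delta (pmul p q) h0))"
    by (simp add: sum_distrib_right mult.assoc)
  also have "\<dots> = (\<Sum>i\<in>I. c i * (\<Sum>p\<in>A. \<Sum>q\<in>rsupp s. f i p * s q * delta (pmul p q) h0))"
    by (simp only: sum_distrib_left) (rule sum_nested_swap)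
  also have "\<dots> = (\<Sum>i\<in>I. c i * rmul (f i) s h0)"
    using A s by (intro sum.cong refl arg_cong2[where f="(*)"] rmul_eq_sum[symmetric])
                 (auto simp: A_def)
  finally show ?thesis .
qed

lemma rmul_lincomb_right:
  assumes I: "finite I" and f: "\<forall>i\<in>I. finite (rsupp (f i))" and r: "finite (rsupp r)"
  shows "rmul r (\<lambda>h. \<Sum>i\<in>I. c i * f i h) h0 = (\<Sum>i\<in>I. c i * rmul r (f i) h0)"
proof -
  define B where "B = (\<Union>i\<in>I. rsupp (f i))"
  have B: "finite B" using I f by (simp add: B_def)
  have "rmul r (\<lambda>h. \<Sum>i\<in>I. c i * f i h) h0
      = (\<Sum>p\<in>rsupp r. \<Sum>q\<in>B. r p * (\<Sum>i\<in>I. c i * f i q) * delta (pmul p q) h0)"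
    using B r rsupp_lincomb[of c f I] by (intro rmul_eq_sum) (auto simp: B_def)
  also have "\<dots> = (\<Sum>p\<in>rsupp r. \<Sum>q\<in>B. \<Sum>i\<in>I. c i * (r p * f i q * delta (pmul p q) h0))"
    by (simp add: sum_distrib_right sum_distrib_left mult_ac)
  also have "\<dots> = (\<Sum>i\<in>I. c i * (\<Sum>p\<in>rsupp r. \<Sum>q\<in>B. r p * f i q * delta (pmul p q) h0))"
    by (simp only: sum_distrib_left) (rule sum_nested_swap)
  also have "\<dots> = (\<Sum>i\<in>I. c i * rmul r (f i) h0)"
    using B r by (intro sum.cong refl arg_cong2[where f="(*)"] rmul_eq_sum[symmetric])
                 (auto simp: B_def)
  finally show ?thesis .
qed

lemma rmul_sum_left:
  "finite I \<Longrightarrow> \<forall>i\<in>I. finite (rsupp (f i)) \<Longrightarrow> finite (rsupp s) \<Longrightarrow>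
   rmul (\<lambda>h. \<Sum>i\<in>I. f i h) s h0 = (\<Sum>i\<in>I. rmul (f i) s h0)"
  using rmul_lincomb_left[of I f s "\<lambda>_. 1"] by simp

lemma rmul_sum_right:
  "finite I \<Longrightarrow> \<forall>i\<in>I. finite (rsupp (f i)) \<Longrightarrow> finite (rsupp r) \<Longrightarrow>
   rmul r (\<lambda>h. \<Sum>i\<in>I. f i h) h0 = (\<Sum>i\<in>I. rmul r (f i) h0)"
  using rmul_lincomb_right[of I f r "\<lambda>_. 1"] by simp

lemma rmul_diff_left:
  assumes "finite (rsupp r)" "finite (rsupp r')" "finite (rsupp s)"
  shows "rmul (\<lambda>h. r h - r' h) s = (\<lambda>h. rmul r s h - rmul r' s h)"
proof
  fix h0
  have "rmul (\<lambda>h. r h - r' h) s h0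
      = rmul (\<lambda>h. \<Sum>i\<in>{True, False}. (if i then 1 else -1) * (if i then r else r') h) s h0"
    by simp
  also have "\<dots> = (\<Sum>i\<in>{True, False}. (if i then 1 else -1) * rmul (if i then r else r') s h0)"
    using assms by (intro rmul_lincomb_left) auto
  finally show "rmul (\<lambda>h. r h - r' h) s h0 = rmul r s h0 - rmul r' s h0" by simp
qed

lemma rmul_diff_right:
  assumes "finite (rsupp r)" "finite (rsupp s)" "finite (rsupp s')"
  shows "rmul r (\<lambda>h. s h - s' h) = (\<lambda>h. rmul r s h - rmul r s' h)"
proof
  fix h0
  have "rmul r (\<lambda>h. s h - s' h) h0
      = rmul r (\<lambda>h. \<Sum>i\<in>{True, False}. (if i then 1 else -1) * (if i then s else s') h) h0"
    by simp
  also have "\<dots> = (\<Sum>i\<in>{True, False}. (if i then 1 else -1) * rmul r (if i then s else s') h0)"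
    using assms by (intro rmul_lincomb_right) auto
  finally show "rmul r (\<lambda>h. s h - s' h) h0 = rmul r s h0 - rmul r s' h0" by simp
qed

lemma rmul_delta: "rmul (delta p) (delta q) = delta (pmul p q)"
  by (rule ext, subst rmul_eq_sum[of "{p}" "{q}"]) (simp_all add: rsupp_delta)

lemma pmul_assoc: "pmul (pmul p q) r = pmul p (pmul q r)"
  by (simp add: pmul_def fmul_assoc)

lemma rmul_assoc:
  assumes r: "finite (rsupp r)" and s: "finite (rsupp s)" and t: "finite (rsupp t)"
  shows "rmul (rmul r s) t = rmul r (rmul s t)"
proof
  fix h0
  let ?R = "rsupp r" and ?S = "rsupp s" and ?T = "rsupp t"
  have delta_left: "rmul (delta p) t h0 = (\<Sum>x\<in>?T. t x * delta (pmul p x) h0)" for p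
    using t by (simp add: rmul_eq_sum[of "{p}" ?T] rsupp_delta)
  have delta_right: "rmul r (delta q) h0 = (\<Sum>p\<in>?R. r p * delta (pmul p q) h0)" for q
    using r by (simp add: rmul_eq_sum[of ?R "{q}"] rsupp_delta)
  have "rmul (rmul r s) t h0
      = (\<Sum>pq\<in>?R \<times> ?S. r (fst pq) * s (snd pq) * rmul (delta (pmul (fst pq) (snd pq))) t h0)"
    using r s t by (simp add: rmul_eq_sum_Times[of ?R ?S] rmul_lincomb_left rsupp_delta)
  also have "\<dots> = (\<Sum>p\<in>?R. \<Sum>q\<in>?S. \<Sum>x\<in>?T. r p * s q * t x * delta (pmul p (pmul q x)) h0)"
    by (simp add: delta_left sum_Times_nested sum_distrib_left pmul_assoc mult_ac)
  also have "\<dots> = (\<Sum>q\<in>?S. \<Sum>x\<in>?T. \<Sum>p\<in>?R. r p * s q * t x * delta (pmul p (pmul q x)) h0)"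
    by (rule sum_nested_swap[symmetric])
  also have "\<dots> = (\<Sum>qx\<in>?S \<times> ?T. s (fst qx) * t (snd qx) * rmul r (delta (pmul (fst qx) (snd qx))) h0)"
    by (simp add: delta_right sum_Times_nested sum_distrib_left mult_ac)
  also have "\<dots> = rmul r (rmul s t) h0"
    using r s t by (simp add: rmul_eq_sum_Times[of ?S ?T] rmul_lincomb_right rsupp_delta)
  finally show "rmul (rmul r s) t h0 = rmul r (rmul s t) h0" .
qed

definition reduced_pairs :: "(word \<times> word) set" where
  "reduced_pairs = {p. reduced (fst p) \<and> reduced (snd p)}"

lemma pmul_reduced_pairs: "pmul p q \<in> reduced_pairs"
  by (simp add: reduced_pairs_def pmul_def fmul_def reduced_reduce)

lemma rmul_one_left:
  assumes "finite (rsupp r)" "rsupp r \<subseteq> reduced_pairs"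
  shows "rmul (delta ([], [])) r = r"
proof
  fix h
  have unit: "pmul ([], []) q = q" if "q \<in> rsupp r" for q
    using that assms(2) by (auto simp: reduced_pairs_def pmul_def fmul_Nil_left)
  have "rmul (delta ([], [])) r h
      = (\<Sum>p\<in>{([], [])}. \<Sum>q\<in>rsupp r. delta ([], []) p * r q * delta (pmul p q) h)"
    using assms by (intro rmul_eq_sum) (auto simp: rsupp_delta)
  also have "\<dots> = (\<Sum>q\<in>rsupp r. if q = h then r q else 0)"
    using unit by (auto simp: delta_def intro: sum.cong)
  also have "\<dots> = r h"
    using assms by (simp add: rsupp_def)
  finally show "rmul (delta ([], [])) r h = r h" .
qed

text \<open>\<open>rmap \<psi>\<close> is the linear extension \<open>\<psi>\<^sub>*\<close> of a map \<open>\<psi>\<close> of the basis \<open>F \<times> G\<close>.\<close>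

definition rmap :: "(word \<times> word \<Rightarrow> word \<times> word) \<Rightarrow> ring_el \<Rightarrow> ring_el" where
  "rmap \<psi> r h' = (\<Sum>h\<in>{h. r h \<noteq> 0 \<and> \<psi> h = h'}. r h)"

lemma rmap_eq_sum:
  assumes "finite R" "rsupp r \<subseteq> R"
  shows "rmap \<psi> r h' = (\<Sum>h\<in>R. r h * delta (\<psi> h) h')"
proof -
  have "{h. r h \<noteq> 0 \<and> \<psi> h = h'} \<subseteq> R" using assms(2) by (auto simp: rsupp_def)
  then have "(\<Sum>h\<in>R. r h * delta (\<psi> h) h') = (\<Sum>h\<in>{h. r h \<noteq> 0 \<and> \<psi> h = h'}. r h)"
    by (intro sum.mono_neutral_cong_right) (use assms in \<open>auto simp: delta_def\<close>)
  then show ?thesis by (simp add: rmap_def)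
qed

lemma rsupp_rmap: "rsupp (rmap \<psi> r) \<subseteq> \<psi> ` rsupp r"
proof
  fix h' assume "h' \<in> rsupp (rmap \<psi> r)"
  then have "{h. r h \<noteq> 0 \<and> \<psi> h = h'} \<noteq> {}"
    unfolding rsupp_def rmap_def by (intro notI) simp
  then show "h' \<in> \<psi> ` rsupp r" by (auto simp: rsupp_def)
qed

lemma rmap_zero: "rmap \<psi> (\<lambda>_. 0) = (\<lambda>_. 0)"
  by (simp add: rmap_def fun_eq_iff)

lemma rmap_delta: "rmap \<psi> (delta p) = delta (\<psi> p)"
  by (rule ext, subst rmap_eq_sum[of "{p}"]) (simp_all add: rsupp_delta)

lemma rmap_lincomb:
  assumes I: "finite I" and f: "\<forall>i\<in>I. finite (rsupp (f i))"
  shows "rmap \<psi> (\<lambda>h. \<Sum>i\<in>I. c i * f i h) = (\<lambda>h'. \<Sum>i\<in>I. c i * rmap \<psi> (f i) h')"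
proof
  fix h'
  define A where "A = (\<Union>i\<in>I. rsupp (f i))"
  have A: "finite A" using I f by (simp add: A_def)
  have "rmap \<psi> (\<lambda>h. \<Sum>i\<in>I. c i * f i h) h' = (\<Sum>h\<in>A. (\<Sum>i\<in>I. c i * f i h) * delta (\<psi> h) h')"
    using A rsupp_lincomb[of c f I] by (intro rmap_eq_sum) (auto simp: A_def)
  also have "\<dots> = (\<Sum>i\<in>I. \<Sum>h\<in>A. c i * (f i h * delta (\<psi> h) h'))"
    by (simp add: sum_distrib_right mult.assoc sum.swap[of _ A])
  also have "\<dots> = (\<Sum>i\<in>I. c i * rmap \<psi> (f i) h')"
  proof (rule sum.cong[OF refl])
    fix i assume "i \<in> I"
    then have "rsupp (f i) \<subseteq> A" by (auto simp: A_def)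
    then show "(\<Sum>h\<in>A. c i * (f i h * delta (\<psi> h) h')) = c i * rmap \<psi> (f i) h'"
      using A by (simp add: rmap_eq_sum[of A] sum_distrib_left)
  qed
  finally show "rmap \<psi> (\<lambda>h. \<Sum>i\<in>I. c i * f i h) h' = (\<Sum>i\<in>I. c i * rmap \<psi> (f i) h')" .
qed

lemma rmap_sum:
  "finite I \<Longrightarrow> \<forall>i\<in>I. finite (rsupp (f i)) \<Longrightarrow>
   rmap \<psi> (\<lambda>h. \<Sum>i\<in>I. f i h) = (\<lambda>h'. \<Sum>i\<in>I. rmap \<psi> (f i) h')"
  using rmap_lincomb[of I f \<psi> "\<lambda>_. 1"] by simp

lemma rmap_diff:
  assumes "finite (rsupp r)" "finite (rsupp s)"
  shows "rmap \<psi> (\<lambda>h. r h - s h) = (\<lambda>h. rmap \<psi> r h - rmap \<psi> s h)"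
proof
  fix h'
  let ?R = "rsupp r \<union> rsupp s"
  have "rmap \<psi> (\<lambda>h. r h - s h) h' = (\<Sum>h\<in>?R. (r h - s h) * delta (\<psi> h) h')"
    using assms rsupp_diff[of r s] by (intro rmap_eq_sum) auto
  also have "\<dots> = rmap \<psi> r h' - rmap \<psi> s h'"
    using assms by (simp add: rmap_eq_sum[of ?R] left_diff_distrib sum_subtractf)
  finally show "rmap \<psi> (\<lambda>h. r h - s h) h' = rmap \<psi> r h' - rmap \<psi> s h'" .
qed

lemma rmap_rmul:
  assumes hom: "\<And>p q. \<psi> (pmul p q) = pmul (\<psi> p) (\<psi> q)"
    and r: "finite (rsupp r)" and s: "finite (rsupp s)"
  shows "rmap \<psi> (rmul r s) = rmul (rmap \<psi> r) (rmap \<psi> s)"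
proof
  fix h0
  let ?R = "rsupp r" and ?S = "rsupp s"
  have "rmap \<psi> (rmul r s) h0
      = (\<Sum>pq\<in>?R \<times> ?S. r (fst pq) * s (snd pq) * delta (\<psi> (pmul (fst pq) (snd pq))) h0)"
    using r s by (simp add: rmul_eq_sum_Times[of ?R ?S] rmap_lincomb rsupp_delta rmap_delta)
  also have "\<dots> = (\<Sum>p\<in>?R. \<Sum>q\<in>?S. r p * s q * delta (pmul (\<psi> p) (\<psi> q)) h0)"
    by (simp add: sum_Times_nested hom)
  also have "\<dots> = rmul (rmap \<psi> r) (rmap \<psi> s) h0"
  proof -
    have map_r: "rmap \<psi> r = (\<lambda>h. \<Sum>p\<in>?R. r p * delta (\<psi> p) h)"
      and map_s: "rmap \<psi> s = (\<lambda>h. \<Sum>q\<in>?S. s q * delta (\<psi> q) h)"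
      using r s by (auto intro!: ext rmap_eq_sum)
    have "finite (rsupp (\<lambda>h. \<Sum>q\<in>?S. s q * delta (\<psi> q) h))"
      using s by (intro finite_rsupp_lincomb) (auto simp: rsupp_delta)
    then show ?thesis
      unfolding map_r map_s using r s
      by (simp add: rmul_lincomb_left rmul_lincomb_right rsupp_delta rmul_delta
                    sum_distrib_left mult.assoc)
  qed
  finally show "rmap \<psi> (rmul r s) h0 = rmul (rmap \<psi> r) (rmap \<psi> s) h0" .
qed

section \<open>Matrices over \<open>R[t]\<close>\<close>

text \<open>A \<open>matrix\<close> is defined at all indices, but only the block \<open>i, j < 2\<close> is meaningful:
\<open>mat_mult\<close> ignores the rest, so identities such as \<open>mat_one \<cdot> M = M\<close> only hold up to
\<open>mat_eq2\<close>.\<close>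

definition mat_eq2 :: "matrix \<Rightarrow> matrix \<Rightarrow> bool" where
  "mat_eq2 M N \<longleftrightarrow> (\<forall>i<2. \<forall>j<2. M i j = N i j)"

lemma mat_eq2_refl [simp]: "mat_eq2 M M"
  by (simp add: mat_eq2_def)

lemma mat_eq2_sym: "mat_eq2 M N \<Longrightarrow> mat_eq2 N M"
  by (simp add: mat_eq2_def)

lemma mat_eq2_trans: "mat_eq2 M N \<Longrightarrow> mat_eq2 N P \<Longrightarrow> mat_eq2 M P"
  by (simp add: mat_eq2_def)

lemma mat_mult_apply: "mat_mult M N i j k = (\<lambda>h. \<Sum>l<2. \<Sum>a\<le>k. rmul (M i l a) (N l j (k - a)) h)"
  by (simp add: mat_mult_def fun_eq_iff)

lemma mat_eq2_mult: "mat_eq2 M M' \<Longrightarrow> mat_eq2 N N' \<Longrightarrow> mat_eq2 (mat_mult M N) (mat_mult M' N')"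
  unfolding mat_eq2_def by (auto simp: mat_mult_apply)

lemma mat_eq2_sub: "mat_eq2 M M' \<Longrightarrow> mat_eq2 N N' \<Longrightarrow> mat_eq2 (mat_sub M N) (mat_sub M' N')"
  unfolding mat_eq2_def by (auto simp: mat_sub_def fun_eq_iff)

definition mat_finite :: "matrix \<Rightarrow> bool" where
  "mat_finite M \<longleftrightarrow> (\<forall>i j k. finite (rsupp (M i j k)))"

definition mat_supp_in :: "(word \<times> word) set \<Rightarrow> matrix \<Rightarrow> bool" where
  "mat_supp_in X M \<longleftrightarrow> (\<forall>i j k. rsupp (M i j k) \<subseteq> X)"

lemma mat_finite_mult: "mat_finite M \<Longrightarrow> mat_finite N \<Longrightarrow> mat_finite (mat_mult M N)"
  unfolding mat_finite_def mat_mult_apply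
  by (intro allI finite_rsupp_sum ballI finite_rsupp_rmul) auto

lemma mat_supp_in_mult:
  assumes "\<And>p q. p \<in> X \<Longrightarrow> q \<in> X \<Longrightarrow> pmul p q \<in> X"
    and "mat_supp_in X M" "mat_supp_in X N"
  shows "mat_supp_in X (mat_mult M N)"
  unfolding mat_supp_in_def mat_mult_apply
proof (intro allI subsetI)
  fix i j k h
  assume "h \<in> rsupp (\<lambda>h. \<Sum>l<2. \<Sum>a\<le>k. rmul (M i l a) (N l j (k - a)) h)"
  then obtain l a where "h \<in> rsupp (rmul (M i l a) (N l j (k - a)))"
    using rsupp_sum[of "\<lambda>l h. \<Sum>a\<le>k. rmul (M i l a) (N l j (k - a)) h" "{..<2}"]
      rsupp_sum[of "\<lambda>a h. rmul (M i _ a) (N _ j (k - a)) h" "{..k}"] by blast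
  then obtain p q where "p \<in> rsupp (M i l a)" "q \<in> rsupp (N l j (k - a))" "h = pmul p q"
    using rsupp_rmul[of "M i l a" "N l j (k - a)"] by auto
  then show "h \<in> X" using assms unfolding mat_supp_in_def by blast
qed

lemma mat_supp_in_sub: "mat_supp_in X M \<Longrightarrow> mat_supp_in X N \<Longrightarrow> mat_supp_in X (mat_sub M N)"
  unfolding mat_supp_in_def mat_sub_def using rsupp_diff by blast

lemma sum_triangle_swap:
  "(\<Sum>b\<le>(k::nat). \<Sum>a\<le>b. g a (b - a)) = (\<Sum>a\<le>k. \<Sum>c\<le>k - a. (g a c :: 'x :: comm_monoid_add))"
proof -
  have "{(a, c). a + c \<le> k} = Sigma {..k} (\<lambda>a. {..k - a})" by auto
  then show ?thesis by (simp add: sum.triangle_reindex_eq[symmetric] sum.Sigma)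
qed

lemma mat_mult_expand_left:
  assumes M: "mat_finite M" and N: "mat_finite N" and P: "mat_finite P"
  shows "mat_mult (mat_mult M N) P i j k h0
    = (\<Sum>l<2. \<Sum>l'<2. \<Sum>a\<le>k. \<Sum>c\<le>k - a. rmul (rmul (M i l a) (N l l' c)) (P l' j (k - a - c)) h0)"
proof -
  have fin: "finite (rsupp (M i j k))" "finite (rsupp (N i j k))" "finite (rsupp (P i j k))"
    for i j k using M N P by (auto simp: mat_finite_def)
  have "mat_mult (mat_mult M N) P i j k h0
      = (\<Sum>l'<2. \<Sum>b\<le>k. \<Sum>l<2. \<Sum>a\<le>b. rmul (rmul (M i l a) (N l l' (b - a))) (P l' j (k - b)) h0)"
    by (simp add: mat_mult_def[of "mat_mult M N"] mat_mult_apply rmul_sum_left fin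
        finite_rsupp_rmul finite_rsupp_sum)
  also have "\<dots> = (\<Sum>l'<2. \<Sum>l<2. \<Sum>b\<le>k. \<Sum>a\<le>b. rmul (rmul (M i l a) (N l l' (b - a))) (P l' j (k - b)) h0)"
    by (rule sum.cong[OF refl], rule sum.swap)
  also have "\<dots> = (\<Sum>l'<2. \<Sum>l<2. \<Sum>a\<le>k. \<Sum>c\<le>k - a. rmul (rmul (M i l a) (N l l' c)) (P l' j (k - a - c)) h0)"
  proof (rule sum.cong[OF refl], rule sum.cong[OF refl])
    fix l' l
    let ?g = "\<lambda>a c. rmul (rmul (M i l a) (N l l' c)) (P l' j (k - a - c)) h0"
    have "(\<Sum>b\<le>k. \<Sum>a\<le>b. rmul (rmul (M i l a) (N l l' (b - a))) (P l' j (k - b)) h0)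
        = (\<Sum>b\<le>k. \<Sum>a\<le>b. ?g a (b - a))"
      by (intro sum.cong refl) auto
    then show "(\<Sum>b\<le>k. \<Sum>a\<le>b. rmul (rmul (M i l a) (N l l' (b - a))) (P l' j (k - b)) h0)
        = (\<Sum>a\<le>k. \<Sum>c\<le>k - a. ?g a c)"
      by (rule trans[OF _ sum_triangle_swap])
  qed
  also have "\<dots> = (\<Sum>l<2. \<Sum>l'<2. \<Sum>a\<le>k. \<Sum>c\<le>k - a. rmul (rmul (M i l a) (N l l' c)) (P l' j (k - a - c)) h0)"
    by (rule sum.swap)
  finally show ?thesis .
qed

lemma mat_mult_expand_right:
  assumes M: "mat_finite M" and N: "mat_finite N" and P: "mat_finite P"
  shows "mat_mult M (mat_mult N P) i j k h0
    = (\<Sum>l<2. \<Sum>l'<2. \<Sum>a\<le>k. \<Sum>c\<le>k - a. rmul (M i l a) (rmul (N l l' c) (P l' j (k - a - c))) h0)"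
proof -
  have fin: "finite (rsupp (M i j k))" "finite (rsupp (N i j k))" "finite (rsupp (P i j k))"
    for i j k using M N P by (auto simp: mat_finite_def)
  have "mat_mult M (mat_mult N P) i j k h0
      = (\<Sum>l<2. \<Sum>a\<le>k. \<Sum>l'<2. \<Sum>c\<le>k - a. rmul (M i l a) (rmul (N l l' c) (P l' j (k - a - c))) h0)"
    by (simp add: mat_mult_def[of M "mat_mult N P"] mat_mult_apply rmul_sum_right fin
        finite_rsupp_rmul finite_rsupp_sum)
  also have "\<dots> = (\<Sum>l<2. \<Sum>l'<2. \<Sum>a\<le>k. \<Sum>c\<le>k - a. rmul (M i l a) (rmul (N l l' c) (P l' j (k - a - c))) h0)"
    by (rule sum.cong[OF refl], rule sum.swap)
  finally show ?thesis .
qed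

lemma mat_mult_assoc:
  assumes "mat_finite M" "mat_finite N" "mat_finite P"
  shows "mat_mult (mat_mult M N) P = mat_mult M (mat_mult N P)"
  using assms by (intro ext) (simp add: mat_mult_expand_left mat_mult_expand_right rmul_assoc mat_finite_def)

lemma rmul_zero_left [simp]: "rmul (\<lambda>_. 0) s = (\<lambda>_. 0)"
  by (simp add: rmul_def fun_eq_iff)

lemma rmul_zero_right [simp]: "rmul r (\<lambda>_. 0) = (\<lambda>_. 0)"
  by (simp add: rmul_def fun_eq_iff)

lemma mat_one_mult:
  assumes "mat_finite M" "mat_supp_in reduced_pairs M"
  shows "mat_eq2 (mat_mult mat_one M) M"
  unfolding mat_eq2_def
proof (intro allI impI ext)
  fix i j k h assume i: "i < (2::nat)" and "j < (2::nat)"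
  have "rmul (mat_one i l a) (M l j (k - a)) h = (if l = i \<and> a = 0 then M i j k h else 0)" for l a
    using assms by (auto simp: mat_one_def rmul_one_left mat_finite_def mat_supp_in_def)
  moreover have "(\<Sum>a\<le>k. if l = i \<and> a = 0 then M i j k h else 0) = (if l = i then M i j k h else 0)" for l
    by (cases "l = i") simp_all
  ultimately show "mat_mult mat_one M i j k h = M i j k h"
    using i by (simp add: mat_mult_def)
qed

lemma mat_mult_degree_le_1:
  assumes "\<And>i j k. 2 \<le> k \<Longrightarrow> M i j k = (\<lambda>_. 0)"
  shows "mat_mult M N i j k h
    = (\<Sum>l<2. rmul (M i l 0) (N l j k) h + (if 1 \<le> k then rmul (M i l 1) (N l j (k - 1)) h else 0))"
proof -
  have "(\<Sum>a\<le>k. g a) = g 0 + (if 1 \<le> k then g 1 else 0)" if "\<forall>a\<ge>2. g a = 0" for g :: "nat \<Rightarrow> int"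
    using that
  proof (induction k)
    case (Suc k)
    then show ?case by (cases k) auto
  qed simp
  then show ?thesis using assms by (simp add: mat_mult_def)
qed

lemma rmul_delta_diff_left:
  "rmul (\<lambda>h. delta p h - delta q h) (delta r) = (\<lambda>h. delta (pmul p r) h - delta (pmul q r) h)"
  by (simp add: rmul_diff_left rsupp_delta rmul_delta)

lemma rmul_delta_diff_right:
  "rmul (delta r) (\<lambda>h. delta p h - delta q h) = (\<lambda>h. delta (pmul r p) h - delta (pmul r q) h)"
  by (simp add: rmul_diff_right rsupp_delta rmul_delta)

lemma rhoF_vanishing: "2 \<le> k \<Longrightarrow> rhoF f i j k = (\<lambda>_. 0)"
  by (simp add: rhoF_def)

lemma rhoG_vanishing: "2 \<le> k \<Longrightarrow> rhoG g i j k = (\<lambda>_. 0)"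
  by (simp add: rhoG_def)

lemma rhoF_mult:
  assumes "reduced f" "reduced g"
  shows "mat_mult (rhoF f) (rhoF g) = rhoF (fmul f g)"
proof (intro ext)
  fix i j k :: nat and h
  have units: "pmul (f, []) (g, []) = (fmul f g, [])" "pmul (f, []) ([], []) = (f, [])"
    "pmul ([], []) (g, []) = (g, [])" "pmul ([], []) ([], []) = ([], [])"
    using assms by (simp_all add: pmul_def fmul_Nil_left fmul_Nil_right)
  have "i = 0 \<or> i = 1 \<or> 2 \<le> i" "j = 0 \<or> j = 1 \<or> 2 \<le> j" "k = 0 \<or> k = 1 \<or> k = 2 \<or> 3 \<le> k"
    by arith+
  then show "mat_mult (rhoF f) (rhoF g) i j k h = rhoF (fmul f g) i j k h"
    by (elim disjE) (simp_all add: mat_mult_degree_le_1[OF rhoF_vanishing] rhoF_def numeral_2_eq_2 lessThan_Suc rmul_delta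
        rmul_delta_diff_left rmul_delta_diff_right units)
qed

lemma rhoG_mult:
  assumes "reduced f" "reduced g"
  shows "mat_mult (rhoG f) (rhoG g) = rhoG (fmul f g)"
proof (intro ext)
  fix i j k :: nat and h
  have units: "pmul ([], f) ([], g) = ([], fmul f g)" "pmul ([], f) ([], []) = ([], f)"
    "pmul ([], []) ([], g) = ([], g)" "pmul ([], []) ([], []) = ([], [])"
    using assms by (simp_all add: pmul_def fmul_Nil_left fmul_Nil_right)
  have "i = 0 \<or> i = 1 \<or> 2 \<le> i" "j = 0 \<or> j = 1 \<or> 2 \<le> j" "k = 0 \<or> k = 1 \<or> k = 2 \<or> 3 \<le> k"
    by arith+
  then show "mat_mult (rhoG f) (rhoG g) i j k h = rhoG (fmul f g) i j k h"
    by (elim disjE) (simp_all add: mat_mult_degree_le_1[OF rhoG_vanishing] rhoG_def numeral_2_eq_2 lessThan_Suc rmul_delta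
        rmul_delta_diff_left rmul_delta_diff_right units)
qed

section \<open>The representation \<open>\<rho>\<close>\<close>

lemma rhoF_Nil: "mat_eq2 (rhoF []) mat_one"
  unfolding mat_eq2_def by (auto simp: rhoF_def mat_one_def delta_def)

lemma rhoG_Nil: "mat_eq2 (rhoG []) mat_one"
  unfolding mat_eq2_def by (auto simp: rhoG_def mat_one_def delta_def)

lemma mat_finite_mat_one: "mat_finite mat_one"
  by (auto simp: mat_finite_def mat_one_def rsupp_delta)

lemma mat_finite_rho_letter: "mat_finite (rho_letter m a)"
  by (auto simp: mat_finite_def rho_letter_def rhoF_def rhoG_def rsupp_delta
      intro: finite_subset[OF rsupp_diff])

lemma mat_supp_in_mat_one: "([], []) \<in> X \<Longrightarrow> mat_supp_in X mat_one"
  by (auto simp: mat_supp_in_def mat_one_def rsupp_delta)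

lemma mat_supp_in_rhoF: "(f, []) \<in> X \<Longrightarrow> ([], []) \<in> X \<Longrightarrow> mat_supp_in X (rhoF f)"
  unfolding mat_supp_in_def rhoF_def using rsupp_diff[of "delta (f, [])" "delta ([], [])"]
  by (auto simp: rsupp_delta)

lemma mat_supp_in_rhoG: "([], g) \<in> X \<Longrightarrow> ([], []) \<in> X \<Longrightarrow> mat_supp_in X (rhoG g)"
  unfolding mat_supp_in_def rhoG_def using rsupp_diff[of "delta ([], g)" "delta ([], [])"]
  by (auto simp: rsupp_delta)

lemma rho_Nil: "rho m [] = mat_one"
  by (simp add: rho_def)

lemma rho_Cons: "rho m (a # w) = mat_mult (rho_letter m a) (rho m w)"
  by (simp add: rho_def)

lemma mat_finite_rho: "mat_finite (rho m w)"
  by (induction w) (simp_all add: rho_Nil rho_Cons mat_finite_mat_one mat_finite_mult mat_finite_rho_letter)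

lemma mat_supp_in_rho:
  assumes "([], []) \<in> X" and closed: "\<And>p q. p \<in> X \<Longrightarrow> q \<in> X \<Longrightarrow> pmul p q \<in> X"
    and letters: "\<And>a. a \<in> set w \<Longrightarrow> mat_supp_in X (rho_letter m a)"
  shows "mat_supp_in X (rho m w)"
  using letters
  by (induction w) (simp_all add: rho_Nil rho_Cons mat_supp_in_mat_one assms(1) mat_supp_in_mult[OF closed])

definition free_pairs :: "nat \<Rightarrow> nat \<Rightarrow> (word \<times> word) set" where
  "free_pairs m n = free_group m \<times> free_group n"

lemma mat_supp_in_rho_free_pairs:
  assumes "\<forall>a\<in>set w. fst a < m + n"
  shows "mat_supp_in (free_pairs m n) (rho m w)"
proof (rule mat_supp_in_rho)
  show "pmul p q \<in> free_pairs m n" if "p \<in> free_pairs m n" "q \<in> free_pairs m n" for p q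
    using that by (auto simp: free_pairs_def pmul_def free_group_fmul)
  show "mat_supp_in (free_pairs m n) (rho_letter m a)" if "a \<in> set w" for a
    using assms that by (auto simp: rho_letter_def free_pairs_def free_group_def
        intro!: mat_supp_in_rhoF mat_supp_in_rhoG)
qed (simp add: free_pairs_def)

lemma mat_supp_in_rho_reduced_pairs: "mat_supp_in reduced_pairs (rho m w)"
  by (rule mat_supp_in_rho[OF _ pmul_reduced_pairs])
     (auto simp: reduced_pairs_def rho_letter_def intro!: mat_supp_in_rhoF mat_supp_in_rhoG)

lemma mat_one_mult_rho: "mat_eq2 (mat_mult mat_one (rho m w)) (rho m w)"
  by (intro mat_one_mult mat_finite_rho mat_supp_in_rho_reduced_pairs)

lemma rho_append: "mat_eq2 (rho m (u @ v)) (mat_mult (rho m u) (rho m v))"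
proof (induction u)
  case Nil
  show ?case using mat_one_mult_rho by (simp add: rho_Nil mat_eq2_sym)
next
  case (Cons a u)
  then have "mat_eq2 (rho m ((a # u) @ v)) (mat_mult (rho_letter m a) (mat_mult (rho m u) (rho m v)))"
    by (simp add: rho_Cons mat_eq2_mult)
  then show ?case
    by (simp add: rho_Cons mat_mult_assoc mat_finite_rho mat_finite_rho_letter)
qed

lemma rho_letter_inv: "mat_eq2 (mat_mult (rho_letter m a) (rho_letter m (letter_inv a))) mat_one"
proof (cases "fst a < m")
  case True
  then show ?thesis by (simp add: rho_letter_def rhoF_mult fmul_letter_inv rhoF_Nil)
next
  case False
  have "fmul [(fst a - m, snd a)] [(fst a - m, \<not> snd a)] = []"
    by (simp add: fmul_def reduce_Cons red_cons_Cons letter_inv_def)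
  then show ?thesis
    using False by (simp add: rho_letter_def rhoG_mult rhoG_Nil letter_inv_def)
qed

lemma rho_red_cons: "mat_eq2 (rho m (red_cons a w)) (mat_mult (rho_letter m a) (rho m w))"
proof (cases w)
  case (Cons b w')
  show ?thesis
  proof (cases "b = letter_inv a")
    case True
    have "mat_mult (rho_letter m a) (rho m w)
        = mat_mult (mat_mult (rho_letter m a) (rho_letter m (letter_inv a))) (rho m w')"
      using Cons True by (simp add: rho_Cons mat_mult_assoc mat_finite_rho mat_finite_rho_letter)
    moreover have "mat_eq2 \<dots> (mat_mult mat_one (rho m w'))"
      by (simp add: mat_eq2_mult rho_letter_inv)
    ultimately show ?thesis
      using Cons True mat_one_mult_rho[of m w']
      by (simp add: red_cons_Cons) (meson mat_eq2_sym mat_eq2_trans)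
  qed (use Cons in \<open>simp add: red_cons_Cons rho_Cons\<close>)
qed (simp add: rho_Cons)

lemma rho_reduce: "mat_eq2 (rho m (reduce w)) (rho m w)"
proof (induction w)
  case (Cons a w)
  then show ?case
    using rho_red_cons[of m a "reduce w"]
    by (simp add: reduce_Cons rho_Cons) (meson mat_eq2_mult mat_eq2_refl mat_eq2_trans)
qed simp

lemma rho_fmul: "mat_eq2 (rho m (fmul u v)) (mat_mult (rho m u) (rho m v))"
  unfolding fmul_def using rho_reduce rho_append mat_eq2_trans by blast

lemma rho_first_factor: "\<forall>a\<in>set f. fst a < m \<Longrightarrow> mat_eq2 (rho m f) (rhoF (reduce f))"
proof (induction f)
  case (Cons a f)
  then have "mat_eq2 (rho m (a # f)) (mat_mult (rhoF [a]) (rhoF (reduce f)))"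
    by (simp add: rho_Cons rho_letter_def mat_eq2_mult)
  moreover have "mat_mult (rhoF [a]) (rhoF (reduce f)) = rhoF (reduce (a # f))"
    by (simp add: rhoF_mult reduced_reduce fmul_def reduce_append_reduce reduce_Cons)
  ultimately show ?case by simp
qed (simp add: rho_Nil mat_eq2_sym rhoF_Nil)

lemma rho_second_factor: "mat_eq2 (rho m (map (shift_letter m) g)) (rhoG (reduce g))"
proof (induction g)
  case (Cons a g)
  have "rho_letter m (shift_letter m a) = rhoG [a]"
    by (simp add: rho_letter_def shift_letter_def)
  then have "mat_eq2 (rho m (map (shift_letter m) (a # g))) (mat_mult (rhoG [a]) (rhoG (reduce g)))"
    using Cons by (simp add: rho_Cons mat_eq2_mult)
  moreover have "mat_mult (rhoG [a]) (rhoG (reduce g)) = rhoG (reduce (a # g))"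
    by (simp add: rhoG_mult reduced_reduce fmul_def reduce_append_reduce reduce_Cons)
  ultimately show ?case by simp
qed (simp add: rho_Nil mat_eq2_sym rhoG_Nil)

section \<open>Transport along \<open>\<alpha> \<otimes> \<beta>\<close>\<close>

definition mat_rmap :: "(word \<times> word \<Rightarrow> word \<times> word) \<Rightarrow> matrix \<Rightarrow> matrix" where
  "mat_rmap \<psi> M i j k = rmap \<psi> (M i j k)"

lemma mat_rmap_mult:
  assumes hom: "\<And>p q. \<psi> (pmul p q) = pmul (\<psi> p) (\<psi> q)" and "mat_finite M" "mat_finite N"
  shows "mat_rmap \<psi> (mat_mult M N) = mat_mult (mat_rmap \<psi> M) (mat_rmap \<psi> N)"
proof (intro ext)
  fix i j k h
  have fin: "finite (rsupp (M i j k))" "finite (rsupp (N i j k))" for i j k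
    using assms by (auto simp: mat_finite_def)
  have "mat_rmap \<psi> (mat_mult M N) i j k h = (\<Sum>l<2. \<Sum>a\<le>k. rmap \<psi> (rmul (M i l a) (N l j (k - a))) h)"
    by (simp add: mat_rmap_def mat_mult_apply rmap_sum fin finite_rsupp_rmul finite_rsupp_sum)
  also have "\<dots> = mat_mult (mat_rmap \<psi> M) (mat_rmap \<psi> N) i j k h"
    by (simp add: mat_mult_def mat_rmap_def rmap_rmul[OF hom] fin)
  finally show "mat_rmap \<psi> (mat_mult M N) i j k h = mat_mult (mat_rmap \<psi> M) (mat_rmap \<psi> N) i j k h" .
qed

lemma mat_rmap_sub:
  assumes "mat_finite M" "mat_finite N"
  shows "mat_rmap \<psi> (mat_sub M N) = mat_sub (mat_rmap \<psi> M) (mat_rmap \<psi> N)"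
proof (intro ext)
  fix i j k h
  have "mat_sub M N i j k = (\<lambda>h. M i j k h - N i j k h)"
    by (simp add: mat_sub_def fun_eq_iff)
  then show "mat_rmap \<psi> (mat_sub M N) i j k h = mat_sub (mat_rmap \<psi> M) (mat_rmap \<psi> N) i j k h"
    using assms by (simp add: mat_rmap_def mat_sub_def mat_finite_def rmap_diff)
qed

lemma mat_rmap_mat_one: "\<psi> ([], []) = ([], []) \<Longrightarrow> mat_rmap \<psi> mat_one = mat_one"
  by (auto simp: mat_rmap_def mat_one_def rmap_delta rmap_zero intro!: ext)

lemma mat_rmap_rhoF: "\<psi> (f, []) = (f', []) \<Longrightarrow> \<psi> ([], []) = ([], []) \<Longrightarrow> mat_rmap \<psi> (rhoF f) = rhoF f'"
  by (auto simp: mat_rmap_def rhoF_def rmap_delta rmap_zero rmap_diff rsupp_delta intro!: ext)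

lemma mat_rmap_rhoG: "\<psi> ([], g) = ([], g') \<Longrightarrow> \<psi> ([], []) = ([], []) \<Longrightarrow> mat_rmap \<psi> (rhoG g) = rhoG g'"
  by (auto simp: mat_rmap_def rhoG_def rmap_delta rmap_zero rmap_diff rsupp_delta intro!: ext)

definition artin_pair :: "letter list \<Rightarrow> letter list \<Rightarrow> word \<times> word \<Rightarrow> word \<times> word" where
  "artin_pair \<alpha> \<beta> p = (artin \<alpha> (fst p), artin \<beta> (snd p))"

lemma artin_pair_pmul: "artin_pair \<alpha> \<beta> (pmul p q) = pmul (artin_pair \<alpha> \<beta> p) (artin_pair \<alpha> \<beta> q)"
  by (simp add: artin_pair_def pmul_def artin_fmul)

lemma artin_tensor_first_factor:
  assumes "fst a < m"
  shows "artin (braid_tensor m \<alpha> \<beta>) [a] = artin \<alpha> [a]"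
proof -
  have "artin (map (shift_letter m) \<beta>) [a] = [a]"
    using assms by (intro artin_fixes) (auto simp: shift_letter_def)
  then show ?thesis by (simp add: braid_tensor_eq artin_append)
qed

lemma artin_tensor_second_factor:
  assumes "braid_word m \<alpha>" "reduced g"
  shows "artin (braid_tensor m \<alpha> \<beta>) (map (shift_letter m) g) = map (shift_letter m) (artin \<beta> g)"
proof -
  have "artin \<alpha> (map (shift_letter m) (artin \<beta> g)) = map (shift_letter m) (artin \<beta> g)"
    using assms by (intro artin_fixes reduced_shift artin_reduced)
                   (auto simp: braid_word_def shift_letter_def)
  then show ?thesis by (simp add: braid_tensor_eq artin_append artin_shift)
qed

lemma rho_artin_tensor_letter:
  assumes \<alpha>: "braid_word m \<alpha>" and \<beta>: "braid_word n \<beta>" and a: "fst a < m + n"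
  shows "mat_eq2 (rho m (artin (braid_tensor m \<alpha> \<beta>) [a])) (mat_rmap (artin_pair \<alpha> \<beta>) (rho_letter m a))"
proof (cases "fst a < m")
  case True
  have "artin \<alpha> [a] \<in> free_group m"
    using True \<alpha> by (intro artin_free_group) (auto simp: free_group_def)
  then have "mat_eq2 (rho m (artin \<alpha> [a])) (rhoF (artin \<alpha> [a]))"
    using rho_first_factor[of "artin \<alpha> [a]" m] by (simp add: free_group_def reduce_reduced)
  then show ?thesis
    using True by (simp add: artin_tensor_first_factor rho_letter_def mat_rmap_rhoF artin_pair_def)
next
  case False
  define b where "b = (fst a - m, snd a)"
  have a_eq: "a = shift_letter m b" using False by (simp add: b_def shift_letter_def)
  have "artin \<beta> [b] \<in> free_group n"
    using \<beta> a False by (intro artin_free_group) (auto simp: free_group_def b_def)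
  then have "mat_eq2 (rho m (map (shift_letter m) (artin \<beta> [b]))) (rhoG (artin \<beta> [b]))"
    using rho_second_factor[of m "artin \<beta> [b]"] by (simp add: free_group_def reduce_reduced)
  moreover have "artin (braid_tensor m \<alpha> \<beta>) [a] = map (shift_letter m) (artin \<beta> [b])"
    using artin_tensor_second_factor[OF \<alpha>, of "[b]" \<beta>] by (simp add: a_eq)
  ultimately show ?thesis
    using False by (simp add: rho_letter_def mat_rmap_rhoG artin_pair_def b_def)
qed

lemma rho_artin_tensor:
  assumes \<alpha>: "braid_word m \<alpha>" and \<beta>: "braid_word n \<beta>"
  shows "w \<in> free_group (m + n) \<Longrightarrow>
    mat_eq2 (rho m (artin (braid_tensor m \<alpha> \<beta>) w)) (mat_rmap (artin_pair \<alpha> \<beta>) (rho m w))"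
proof (induction w)
  case Nil
  then show ?case by (simp add: rho_Nil mat_rmap_mat_one artin_pair_def)
next
  case (Cons a w)
  let ?A = "artin (braid_tensor m \<alpha> \<beta>)" and ?P = "mat_rmap (artin_pair \<alpha> \<beta>)"
  have w: "w \<in> free_group (m + n)" and a: "fst a < m + n"
    using Cons.prems by (auto simp: free_group_def dest: reduced_ConsD)
  have "a # w = fmul [a] w"
    using Cons.prems by (simp add: fmul_def reduce_reduced free_group_def)
  then have "mat_eq2 (rho m (?A (a # w))) (mat_mult (rho m (?A [a])) (rho m (?A w)))"
    by (simp add: artin_fmul rho_fmul)
  moreover have "mat_eq2 (mat_mult (rho m (?A [a])) (rho m (?A w))) (mat_mult (?P (rho_letter m a)) (?P (rho m w)))"
    using rho_artin_tensor_letter[OF \<alpha> \<beta> a] Cons.IH[OF w] by (rule mat_eq2_mult)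
  moreover have "mat_mult (?P (rho_letter m a)) (?P (rho m w)) = ?P (rho m (a # w))"
    by (simp add: rho_Cons mat_rmap_mult artin_pair_pmul mat_finite_rho mat_finite_rho_letter)
  ultimately show ?case by (metis mat_eq2_trans)
qed

section \<open>Positivity is preserved\<close>

lemma rmap_apply_inj_on:
  assumes "rsupp r \<subseteq> X" "inj_on \<psi> X" "h \<in> X"
  shows "rmap \<psi> r (\<psi> h) = r h"
proof -
  have "{h'. r h' \<noteq> 0 \<and> \<psi> h' = \<psi> h} = (if r h \<noteq> 0 then {h} else {})"
    using assms by (auto simp: rsupp_def inj_on_def)
  then show ?thesis by (simp add: rmap_def)
qed

lemma rmap_eq_zero_iff:
  assumes "rsupp r \<subseteq> X" "inj_on \<psi> X"
  shows "rmap \<psi> r = (\<lambda>_. 0) \<longleftrightarrow> r = (\<lambda>_. 0)"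
proof
  assume zero: "rmap \<psi> r = (\<lambda>_. 0)"
  show "r = (\<lambda>_. 0)"
  proof
    fix h
    show "r h = 0"
    proof (rule ccontr)
      assume "r h \<noteq> 0"
      then have "h \<in> X" using assms by (auto simp: rsupp_def)
      then show False using zero \<open>r h \<noteq> 0\<close> rmap_apply_inj_on[OF assms] by (metis)
    qed
  qed
qed (simp add: rmap_zero)

definition lex_mono_on ::
  "(word \<Rightarrow> word \<Rightarrow> bool) \<Rightarrow> (word \<Rightarrow> word \<Rightarrow> bool) \<Rightarrow> (word \<times> word \<Rightarrow> word \<times> word) \<Rightarrow> (word \<times> word) set \<Rightarrow> bool"
where
  "lex_mono_on lt1 lt2 \<psi> X \<longleftrightarrow> (\<forall>h\<in>X. \<forall>h'\<in>X. lex_lt lt1 lt2 h' h \<longrightarrow> lex_lt lt1 lt2 (\<psi> h') (\<psi> h))"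

lemma rpos_rmap:
  assumes supp: "rsupp r \<subseteq> X" and inj: "inj_on \<psi> X" and mono: "lex_mono_on lt1 lt2 \<psi> X"
    and "rpos lt1 lt2 r"
  shows "rpos lt1 lt2 (rmap \<psi> r)"
proof -
  obtain h where h: "r h > 0" "\<forall>h'. r h' \<noteq> 0 \<longrightarrow> h' = h \<or> lex_lt lt1 lt2 h' h"
    using assms(4) by (auto simp: rpos_def)
  have "h \<in> X" using h(1) supp by (auto simp: rsupp_def)
  have "h'' = \<psi> h \<or> lex_lt lt1 lt2 h'' (\<psi> h)" if "rmap \<psi> r h'' \<noteq> 0" for h''
  proof -
    have "h'' \<in> \<psi> ` rsupp r"
      using that rsupp_rmap[of \<psi> r] by (auto simp: rsupp_def)
    then obtain h' where h': "h'' = \<psi> h'" "r h' \<noteq> 0"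
      by (auto simp: rsupp_def)
    then have "h' \<in> X" using supp by (auto simp: rsupp_def)
    then show ?thesis using h' h(2) \<open>h \<in> X\<close> mono unfolding lex_mono_on_def by blast
  qed
  moreover have "rmap \<psi> r (\<psi> h) > 0"
    using rmap_apply_inj_on[OF supp inj \<open>h \<in> X\<close>] h(1) by simp
  ultimately show ?thesis unfolding rpos_def by blast
qed

lemma mat_pos_transfer:
  assumes zero_iff: "\<And>i j k. (i, j) \<in> set positions \<Longrightarrow> N i j k = (\<lambda>_. 0) \<longleftrightarrow> M i j k = (\<lambda>_. 0)"
    and rpos: "\<And>i j k. (i, j) \<in> set positions \<Longrightarrow> rpos lt1 lt2 (M i j k) \<Longrightarrow> rpos lt1 lt2 (N i j k)"
    and "mat_pos lt1 lt2 M"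
  shows "mat_pos lt1 lt2 N"
proof -
  obtain k i j where below: "\<forall>k'<k. \<forall>(i', j')\<in>set positions. M i' j' k' = (\<lambda>_. 0)"
    and first: "find (\<lambda>(i', j'). M i' j' k \<noteq> (\<lambda>_. 0)) positions = Some (i, j)"
    and "rpos lt1 lt2 (M i j k)"
    using assms(3) unfolding mat_pos_def by blast
  have ij: "(i, j) \<in> set positions"
    using first by (auto simp: find_Some_iff) (metis nth_mem)
  have "\<forall>k'<k. \<forall>(i', j')\<in>set positions. N i' j' k' = (\<lambda>_. 0)"
  proof (intro allI impI ballI)
    fix k' p assume "k' < k" "p \<in> set positions"
    then show "case p of (i', j') \<Rightarrow> N i' j' k' = (\<lambda>_. 0)"
      using below zero_iff by (cases p) auto
  qed
  moreover have "find (\<lambda>(i', j'). N i' j' k \<noteq> (\<lambda>_. 0)) positions = Some (i, j)"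
  proof -
    have "find (\<lambda>(i', j'). N i' j' k \<noteq> (\<lambda>_. 0)) positions
        = find (\<lambda>(i', j'). M i' j' k \<noteq> (\<lambda>_. 0)) positions"
      by (rule find_cong[OF refl]) (use zero_iff in auto)
    then show ?thesis using first by simp
  qed
  moreover have "rpos lt1 lt2 (N i j k)"
    using rpos[OF ij] \<open>rpos lt1 lt2 (M i j k)\<close> .
  ultimately show ?thesis unfolding mat_pos_def by blast
qed

lemma mat_pos_mat_eq2: "mat_eq2 M N \<Longrightarrow> mat_pos lt1 lt2 M \<Longrightarrow> mat_pos lt1 lt2 N"
  by (rule mat_pos_transfer) (auto simp: mat_eq2_def positions_def)

lemma mat_pos_mat_rmap:
  assumes "mat_supp_in X M" "inj_on \<psi> X" "lex_mono_on lt1 lt2 \<psi> X" "mat_pos lt1 lt2 M"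
  shows "mat_pos lt1 lt2 (mat_rmap \<psi> M)"
  using assms(4)
proof (rule mat_pos_transfer[rotated 2])
  show "mat_rmap \<psi> M i j k = (\<lambda>_. 0) \<longleftrightarrow> M i j k = (\<lambda>_. 0)" for i j k
    using rmap_eq_zero_iff[of "M i j k" X \<psi>] assms(1,2) by (simp add: mat_rmap_def mat_supp_in_def)
  show "rpos lt1 lt2 (M i j k) \<Longrightarrow> rpos lt1 lt2 (mat_rmap \<psi> M i j k)" for i j k
    using rpos_rmap[OF _ assms(2,3)] assms(1) by (simp add: mat_rmap_def mat_supp_in_def)
qed

lemma bi_order_irrefl: "bi_order n lt \<Longrightarrow> x \<in> free_group n \<Longrightarrow> \<not> lt x x"
  by (simp add: bi_order_def)

lemma bi_order_total:
  "bi_order n lt \<Longrightarrow> x \<in> free_group n \<Longrightarrow> y \<in> free_group n \<Longrightarrow> x \<noteq> y \<Longrightarrow> lt x y \<or> lt y x"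
  by (simp add: bi_order_def)

lemma artin_inj_on:
  assumes order: "bi_order m lt" and "braid_word m bw" "preserves m lt bw"
  shows "inj_on (artin bw) (free_group m)"
proof (rule inj_onI, rule ccontr)
  fix f f' assume f: "f \<in> free_group m" and f': "f' \<in> free_group m"
    and eq: "artin bw f = artin bw f'" and "f \<noteq> f'"
  have "lt (artin bw f) (artin bw f') \<or> lt (artin bw f') (artin bw f)"
    using bi_order_total[OF order f f' \<open>f \<noteq> f'\<close>] assms(3) f f' unfolding preserves_def by blast
  then show False
    using bi_order_irrefl[OF order artin_free_group[OF assms(2) f]] eq by simp
qed

lemma inj_on_artin_pair:
  assumes "bi_order m lt1" "bi_order n lt2" "braid_word m \<alpha>" "braid_word n \<beta>"
    "preserves m lt1 \<alpha>" "preserves n lt2 \<beta>"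
  shows "inj_on (artin_pair \<alpha> \<beta>) (free_pairs m n)"
  using artin_inj_on[OF assms(1,3,5)] artin_inj_on[OF assms(2,4,6)]
  by (auto simp: inj_on_def artin_pair_def free_pairs_def)

lemma lex_mono_on_artin_pair:
  "preserves m lt1 \<alpha> \<Longrightarrow> preserves n lt2 \<beta> \<Longrightarrow> lex_mono_on lt1 lt2 (artin_pair \<alpha> \<beta>) (free_pairs m n)"
  unfolding lex_mono_on_def lex_lt_def artin_pair_def free_pairs_def preserves_def by auto

theorem proposition6p2:
  fixes m n :: nat
    and lt1 lt2 :: "word \<Rightarrow> word \<Rightarrow> bool"
    and \<alpha> \<beta> :: "letter list"
  assumes "bi_order m lt1" and "bi_order n lt2"
    and "braid_word m \<alpha>" and "braid_word n \<beta>"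
    and "preserves m lt1 \<alpha>" and "preserves n lt2 \<beta>"
  shows "preserves (m + n) (prec m lt1 lt2) (braid_tensor m \<alpha> \<beta>)"
  unfolding preserves_def prec_def
proof (intro ballI impI)
  fix x y assume x: "x \<in> free_group (m + n)" and y: "y \<in> free_group (m + n)"
    and pos: "mat_pos lt1 lt2 (mat_sub (rho m y) (rho m x))"
  let ?A = "artin (braid_tensor m \<alpha> \<beta>)" and ?\<psi> = "artin_pair \<alpha> \<beta>"
  have "mat_supp_in (free_pairs m n) (mat_sub (rho m y) (rho m x))"
    using x y by (intro mat_supp_in_sub mat_supp_in_rho_free_pairs) (auto simp: free_group_def)
  then have "mat_pos lt1 lt2 (mat_rmap ?\<psi> (mat_sub (rho m y) (rho m x)))"
    using inj_on_artin_pair[OF assms] lex_mono_on_artin_pair[OF assms(5,6)] pos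
    by (rule mat_pos_mat_rmap)
  moreover have "mat_eq2 (mat_rmap ?\<psi> (mat_sub (rho m y) (rho m x))) (mat_sub (rho m (?A y)) (rho m (?A x)))"
    using rho_artin_tensor[OF assms(3,4)] x y
    by (simp add: mat_rmap_sub mat_finite_rho mat_eq2_sub mat_eq2_sym)
  ultimately show "mat_pos lt1 lt2 (mat_sub (rho m (?A y)) (rho m (?A x)))"
    by (rule mat_pos_mat_eq2[rotated])
qed

end
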